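(* Let $(\mathcal V,\mathcal W,\lambda)$ be a FTvN system and $x,y\in\mathcal V$. Then: (a) $x\prec y$ implies $\langle c,x\rangle\le\langle\lambda(c),\lambda(y)\rangle$ for all $c\in\mathcal V$; the reverse implication holds if $\mathcal V$ is finite dimensional. (b) $x\prec y$ implies $\langle\lambda(c),\lambda(x)\rangle\le\langle\lambda(c),\lambda(y)\rangle$ for all $c\in\mathcal V$; the reverse implication holds if $\mathcal V$ is finite dimensional. (c) $x\prec y$ and $y\prec x$ if and only if $[x]=[y]$.
   Context: A Fan-Theobald-von Neumann (FTvN) system is a triple $(\mathcal V,\mathcal W,\lambda)$ where $\mathcal V,\mathcal W$ are real inner product spaces and $\lambda:\mathcal V\to\mathcal W$ is a map such that: (A1) $\|\lambda(x)\|=\|x\|$ for all $x$; (A2) $\langle x,y\rangle\le\langle\lambda(x),\lambda(y)\rangle$ for all $x,y$; (A3) for every $c\in\mathcal V$ and $q\in\lambda(\mathcal V)$ there exists $x$ with $\lambda(x)=q$ and $\langle c,x\rangle=\langle\lambda(c),\lambda(x)\rangle$. The $\lambda$-orbit of $u$ is $[u]=\{z\in\mathcal V:\lambda(z)=\lambda(u)\}$. Majorization: $x\prec y$ means $x\in\operatorname{conv}[y]$ (convex hull, not closure). *)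

theory Defs
  imports "HOL-Analysis.Analysis"
begin

definition FTvN_system :: "('v::real_inner \<Rightarrow> 'w::real_inner) \<Rightarrow> bool" where
  "FTvN_system lam \<longleftrightarrow>
     (\<forall>x. norm (lam x) = norm x) \<and>
     (\<forall>x y. inner x y \<le> inner (lam x) (lam y)) \<and>
     (\<forall>c q. q \<in> range lam \<longrightarrow> (\<exists>x. lam x = q \<and> inner c x = inner (lam c) (lam x)))"

definition orbit :: "('v \<Rightarrow> 'w) \<Rightarrow> 'v \<Rightarrow> 'v set" where
  "orbit lam u = {z. lam z = lam u}"

text \<open>Majorization x \<prec> y: x lies in the convex hull (not its closure) of [y].\<close>
definition majorized :: "('v::real_vector \<Rightarrow> 'w) \<Rightarrow> 'v \<Rightarrow> 'v \<Rightarrow> bool" where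
  "majorized lam x y \<longleftrightarrow> x \<in> convex hull (orbit lam y)"

definition fin_dim_space :: "'v::real_vector itself \<Rightarrow> bool" where
  "fin_dim_space TYPE('v) \<longleftrightarrow> (\<exists>B::'v set. finite B \<and> span B = UNIV)"

end

theory Submission
  imports Defs
begin

(* For (a), the forward direction holds because each z in [y] satisfies
   <c, z> <= <lambda c, lambda z> = <lambda c, lambda y> by (A2), and half-spaces are convex.
   Conversely, (A1) and (A2) make lambda 1-Lipschitz, so in finite dimension the orbit [y] is
   compact, hence so is its convex hull (Caratheodory).  A point x outside it is strictly
   separated by some c, while (A3) yields z in [y] with <c, z> = <lambda c, lambda y>, contradicting
   the hypothesis at c.  Part (b) reduces to (a): (A3) turns lambda c into a c' with
   <c', x> = <lambda c, lambda x>, and (A2) gives the converse.  For (c), (a) at c = x and c = y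
   gives |x|^2 + |y|^2 <= 2 <lambda x, lambda y>, i.e. |lambda x - lambda y|^2 <= 0. *)

lemma inner_sum_pairwise_orthogonal:
  fixes U :: "'a::real_inner set"
  assumes "finite U" "pairwise orthogonal U" "v \<in> U"
  shows "inner v (\<Sum>u\<in>U. e u *\<^sub>R u) = e v * inner v v"
proof -
  have "inner v (\<Sum>u\<in>U. e u *\<^sub>R u) = (\<Sum>u\<in>U. if u = v then e v * inner v v else 0)"
    unfolding inner_sum_right
    by (rule sum.cong) (use assms(2,3) in \<open>auto simp: pairwise_def orthogonal_def\<close>)
  then show ?thesis
    using assms(1,3) by simp
qed

lemma orthogonal_expansion:
  fixes U :: "'a::real_inner set"
  assumes "finite U" "0 \<notin> U" "pairwise orthogonal U" "x \<in> span U"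
  shows "(\<Sum>u\<in>U. (inner u x / inner u u) *\<^sub>R u) = x"
proof -
  define d where "d = x - (\<Sum>u\<in>U. (inner u x / inner u u) *\<^sub>R u)"
  have "orthogonal d v" if "v \<in> U" for v
    using inner_sum_pairwise_orthogonal[OF assms(1,3) that, where e="\<lambda>u. inner u x / inner u u"]
    by (simp add: d_def orthogonal_def inner_diff_right inner_commute)
  moreover have "d \<in> span U"
    using assms(4) by (simp add: d_def span_diff span_sum span_scale span_base)
  ultimately have "orthogonal d d"
    by (meson orthogonal_commute orthogonal_to_span)
  then show ?thesis
    by (simp add: d_def orthogonal_def)
qed

lemma orthogonal_basis_fd:
  fixes B :: "'a::real_inner set"
  assumes "finite B" "span B = UNIV"
  obtains U :: "'a set" where "finite U" "0 \<notin> U" "pairwise orthogonal U" "span U = UNIV"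
proof -
  obtain U :: "'a set" where U: "finite U" "span U = UNIV" "pairwise orthogonal U"
    using basis_orthogonal[OF assms(1)] assms(2) by auto
  then show ?thesis
    using that[of "U - {0}"] by (auto simp: pairwise_def span_delete_0)
qed

lemma bounded_seq_convergent_subseq_fd:
  fixes B :: "'a::real_inner set" and f :: "nat \<Rightarrow> 'a"
  assumes "finite B" "span B = UNIV" "bounded (range f)"
  shows "\<exists>l r. strict_mono r \<and> (f \<circ> r) \<longlonglongrightarrow> l"
proof -
  obtain U :: "'a set" where U: "finite U" "0 \<notin> U" "pairwise orthogonal U" "span U = UNIV"
    using orthogonal_basis_fd[OF assms(1,2)] by blast
  define coord where "coord x u = inner u x / inner u u" for x u :: 'a
  define comb where "comb e = (\<Sum>u\<in>U. e u *\<^sub>R u)" for e :: "'a \<Rightarrow> real"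
  have comb_coord: "comb (coord x) = x" for x
    using orthogonal_expansion[OF U(1-3)] U(4) by (simp add: comb_def coord_def)
  have coord_comb: "coord (comb e) u = e u" if "u \<in> U" for e u
    using inner_sum_pairwise_orthogonal[OF U(1,3) that] U(2) that
    by (auto simp: comb_def coord_def)
  have "bounded_linear (\<lambda>x. coord x u)" for u
    unfolding coord_def
    by (rule bounded_linear_compose[OF bounded_linear_divide bounded_linear_inner_right])
  then have "bounded ((\<lambda>x. coord x u) ` range f)" for u
    using assms(3) bounded_linear_image by blast
  then obtain l r where r: "strict_mono r"
    and conv: "\<And>e. e > 0 \<Longrightarrow> \<forall>\<^sub>F n in sequentially. \<forall>u\<in>U. dist (coord (f (r n)) u) (coord l u) < e"
    using compact_lemma_general[where f=f and proj=coord and unproj=comb and basis=U,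
        OF U(1) _ coord_comb comb_coord]
    by blast
  have "(\<lambda>n. coord (f (r n)) u) \<longlonglongrightarrow> coord l u" if "u \<in> U" for u
    unfolding tendsto_iff using conv that by (fastforce elim: eventually_mono)
  then have "(\<lambda>n. comb (coord (f (r n)))) \<longlonglongrightarrow> comb (coord l)"
    unfolding comb_def by (intro tendsto_sum tendsto_scaleR tendsto_const) auto
  then have "(f \<circ> r) \<longlonglongrightarrow> l"
    by (simp add: comb_coord o_def)
  then show ?thesis
    using r by blast
qed

lemma bounded_closed_imp_compact_fd:
  fixes B S :: "'a::real_inner set"
  assumes "finite B" "span B = UNIV" "bounded S" "closed S"
  shows "compact S"
  unfolding compact_eq_seq_compact_metric seq_compact_def
proof (intro allI impI)
  fix f :: "nat \<Rightarrow> 'a"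
  assume f: "\<forall>n. f n \<in> S"
  then have "bounded (range f)"
    using assms(3) by (meson bounded_subset image_subset_iff)
  then obtain l r where "strict_mono r" "(f \<circ> r) \<longlonglongrightarrow> l"
    using bounded_seq_convergent_subseq_fd[OF assms(1,2)] by blast
  moreover have "l \<in> S"
    using closed_sequentially[OF assms(4) _ \<open>(f \<circ> r) \<longlonglongrightarrow> l\<close>] f by auto
  ultimately show "\<exists>l\<in>S. \<exists>r. strict_mono r \<and> (f \<circ> r) \<longlonglongrightarrow> l"
    by blast
qed

lemma affine_independent_card_le_fd:
  fixes B T :: "'a::real_vector set"
  assumes "finite B" "span B = UNIV" "\<not> affine_dependent T"
  shows "card T \<le> card B + 1"
proof (cases "T = {}")
  case False
  then obtain a where a: "a \<in> T"
    by blast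
  let ?D = "(\<lambda>x. -a + x) ` (T - {a})"
  have "independent ?D"
    using assms(3) affine_dependent_iff_dependent2[OF a] by simp
  then have "finite ?D" "card ?D \<le> card B"
    using independent_span_bound[OF assms(1), of ?D] assms(2) by simp_all
  moreover have "inj_on (\<lambda>x. -a + x) (T - {a})"
    by (simp add: inj_on_def)
  ultimately have "finite (T - {a})" "card (T - {a}) \<le> card B"
    by (simp_all add: finite_image_iff card_image)
  then show ?thesis
    using card_Suc_Diff1[OF _ a] by simp
qed simp

lemma affine_dependent_explicit_pos:
  fixes S :: "'a::real_vector set"
  assumes "finite S" "affine_dependent S"
  shows "\<exists>w. sum w S = 0 \<and> (\<Sum>v\<in>S. w v *\<^sub>R v) = 0 \<and> (\<exists>v\<in>S. 0 < w v)"
proof -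
  obtain w where w: "sum w S = 0" "\<exists>v\<in>S. w v \<noteq> 0" "(\<Sum>v\<in>S. w v *\<^sub>R v) = 0"
    using assms(2) by (auto simp: affine_dependent_explicit_finite[OF assms(1)])
  have "\<exists>v\<in>S. 0 < w v"
  proof (rule ccontr)
    assume "\<not> (\<exists>v\<in>S. 0 < w v)"
    then have "0 \<le> - w v" if "v \<in> S" for v
      using that by force
    moreover have "sum (\<lambda>v. - w v) S = 0"
      using w(1) by (simp add: sum_negf)
    ultimately have "\<forall>v\<in>S. - w v = 0"
      using sum_nonneg_eq_0_iff[OF assms(1), of "\<lambda>v. - w v"] by simp
    then show False
      using w(2) by simp
  qed
  then show ?thesis
    using w(1,3) by blast
qed

lemma convex_hull_remove_zero_weight:
  fixes S :: "'a::real_vector set"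
  assumes "finite S" "a \<in> S" "\<And>v. v \<in> S \<Longrightarrow> 0 \<le> u v" "u a = 0" "sum u S = 1"
  shows "(\<Sum>v\<in>S. u v *\<^sub>R v) \<in> convex hull (S - {a})"
proof -
  have "sum u (S - {a}) = 1" "(\<Sum>v\<in>S - {a}. u v *\<^sub>R v) = (\<Sum>v\<in>S. u v *\<^sub>R v)"
    using assms(4,5) by (simp_all add: sum.remove[OF assms(1,2)])
  then show ?thesis
    using assms(3) by (auto simp: convex_hull_finite[OF finite_Diff[OF assms(1)]])
qed

lemma convex_hull_affine_dependent_remove:
  fixes S :: "'a::real_vector set"
  assumes "finite S" "affine_dependent S" "x \<in> convex hull S"
  shows "\<exists>a\<in>S. x \<in> convex hull (S - {a})"
proof -
  obtain u where u: "\<forall>v\<in>S. 0 \<le> u v" "sum u S = 1" "(\<Sum>v\<in>S. u v *\<^sub>R v) = x"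
    using assms(3) by (auto simp: convex_hull_finite[OF assms(1)])
  obtain w where w: "sum w S = 0" "(\<Sum>v\<in>S. w v *\<^sub>R v) = 0" "\<exists>v\<in>S. 0 < w v"
    using affine_dependent_explicit_pos[OF assms(1,2)] by blast
  define P where "P = {v\<in>S. 0 < w v}"
  have "finite P" "P \<noteq> {}"
    using assms(1) w(3) by (auto simp: P_def)
  \<comment> \<open>Move along the affine dependence until the first coefficient hits zero.\<close>
  define t where "t = Min ((\<lambda>v. u v / w v) ` P)"
  have "t \<in> (\<lambda>v. u v / w v) ` P"
    unfolding t_def using \<open>finite P\<close> \<open>P \<noteq> {}\<close> by (intro Min_in) auto
  then obtain a where a: "a \<in> P" "t = u a / w a"
    by blast
  have "0 \<le> t"
    using a u(1) by (simp add: P_def)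
  define u' where "u' v = u v - t * w v" for v
  have u'_nonneg: "0 \<le> u' v" if "v \<in> S" for v
  proof (cases "v \<in> P")
    case True
    then have "t \<le> u v / w v"
      using \<open>finite P\<close> by (simp add: t_def)
    then show ?thesis
      using True by (simp add: u'_def P_def pos_le_divide_eq)
  next
    case False
    then show ?thesis
      using mult_nonneg_nonpos[OF \<open>0 \<le> t\<close>, of "w v"] that u(1) by (auto simp: u'_def P_def)
  qed
  have "a \<in> S" "u' a = 0"
    using a by (simp_all add: u'_def P_def)
  have "sum u' S = 1"
    using u(2) w(1) by (simp add: u'_def sum_subtractf flip: sum_distrib_left)
  have "(\<Sum>v\<in>S. u' v *\<^sub>R v) = (\<Sum>v\<in>S. u v *\<^sub>R v) - t *\<^sub>R (\<Sum>v\<in>S. w v *\<^sub>R v)"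
    by (simp add: u'_def scaleR_diff_left sum_subtractf scaleR_sum_right)
  also have "\<dots> = x"
    using u(3) w(2) by simp
  finally show ?thesis
    using convex_hull_remove_zero_weight[OF assms(1) \<open>a \<in> S\<close> u'_nonneg \<open>u' a = 0\<close> \<open>sum u' S = 1\<close>]
      \<open>a \<in> S\<close> by auto
qed

lemma convex_hull_affine_independent_subset:
  fixes S :: "'a::real_vector set"
  assumes "finite S" "x \<in> convex hull S"
  shows "\<exists>T\<subseteq>S. \<not> affine_dependent T \<and> x \<in> convex hull T"
  using assms
proof (induction S rule: finite_psubset_induct)
  case (psubset S)
  show ?case
  proof (cases "affine_dependent S")
    case True
    then obtain a where a: "a \<in> S" "x \<in> convex hull (S - {a})"
      using convex_hull_affine_dependent_remove[OF psubset.hyps(1) True psubset.prems] by blast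
    then have "S - {a} \<subset> S"
      by blast
    then show ?thesis
      using psubset.IH a(2) by (meson Diff_subset order_trans)
  next
    case False
    then show ?thesis
      using psubset.prems by blast
  qed
qed

definition convex_hull_upto :: "nat \<Rightarrow> 'a::real_vector set \<Rightarrow> 'a set" where
  "convex_hull_upto n K = {x. \<exists>T. finite T \<and> T \<subseteq> K \<and> card T \<le> n \<and> x \<in> convex hull T}"

lemma convex_hull_upto_0: "convex_hull_upto 0 K = {}"
  by (auto simp: convex_hull_upto_def)

lemma convex_hull_upto_Suc_subset:
  "convex_hull_upto (Suc n) K \<subseteq>
     K \<union> {(1 - u) *\<^sub>R a + u *\<^sub>R b | a b u. 0 \<le> u \<and> u \<le> 1 \<and> a \<in> K \<and> b \<in> convex_hull_upto n K}"
proof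
  fix x
  assume "x \<in> convex_hull_upto (Suc n) K"
  then obtain T where T: "finite T" "T \<subseteq> K" "card T \<le> Suc n" "x \<in> convex hull T"
    by (auto simp: convex_hull_upto_def)
  then obtain a where "a \<in> T"
    by fastforce
  show "x \<in> K \<union> {(1 - u) *\<^sub>R a + u *\<^sub>R b | a b u. 0 \<le> u \<and> u \<le> 1 \<and> a \<in> K \<and> b \<in> convex_hull_upto n K}"
  proof (cases "T - {a} = {}")
    case True
    then have "T = {a}"
      using \<open>a \<in> T\<close> by blast
    then show ?thesis
      using T(2,4) by simp
  next
    case False
    have "convex hull T =
        {(1 - u) *\<^sub>R a + u *\<^sub>R b | b u. 0 \<le> u \<and> u \<le> 1 \<and> b \<in> convex hull (T - {a})}"
      using convex_hull_insert_alt[of a "T - {a}"] False \<open>a \<in> T\<close> by (simp add: insert_absorb)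
    then obtain b u where x: "x = (1 - u) *\<^sub>R a + u *\<^sub>R b" "0 \<le> u" "u \<le> 1"
        and b: "b \<in> convex hull (T - {a})"
      using T(4) by blast
    have "card (T - {a}) \<le> n"
      using T(1,3) \<open>a \<in> T\<close> by simp
    then have "b \<in> convex_hull_upto n K"
      unfolding convex_hull_upto_def using T(1,2) b by blast
    then show ?thesis
      using x \<open>a \<in> T\<close> T(2) by blast
  qed
qed

lemma convex_hull_upto_Suc_supset:
  "K \<union> {(1 - u) *\<^sub>R a + u *\<^sub>R b | a b u. 0 \<le> u \<and> u \<le> 1 \<and> a \<in> K \<and> b \<in> convex_hull_upto n K}
     \<subseteq> convex_hull_upto (Suc n) K"
proof (intro Un_least subsetI)
  fix x
  assume "x \<in> K"
  then show "x \<in> convex_hull_upto (Suc n) K"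
    unfolding convex_hull_upto_def by (intro CollectI exI[of _ "{x}"]) auto
next
  fix x
  assume "x \<in> {(1 - u) *\<^sub>R a + u *\<^sub>R b | a b u. 0 \<le> u \<and> u \<le> 1 \<and> a \<in> K \<and> b \<in> convex_hull_upto n K}"
  then obtain a b u T where x: "x = (1 - u) *\<^sub>R a + u *\<^sub>R b" "0 \<le> u" "u \<le> 1" "a \<in> K"
    and T: "finite T" "T \<subseteq> K" "card T \<le> n" "b \<in> convex hull T"
    unfolding convex_hull_upto_def by blast
  have "a \<in> convex hull (insert a T)" "b \<in> convex hull (insert a T)"
    using T(4) hull_mono[of T "insert a T"] by (auto intro: hull_inc)
  then have "x \<in> convex hull (insert a T)"
    using x convexD_alt[OF convex_convex_hull] by blast
  moreover have "card (insert a T) \<le> Suc n"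
    using T(1,3) by (simp add: card_insert_if)
  ultimately show "x \<in> convex_hull_upto (Suc n) K"
    unfolding convex_hull_upto_def using T(1,2) x(4) by blast
qed

lemma compact_convex_hull_upto:
  fixes K :: "'a::real_normed_vector set"
  assumes "compact K"
  shows "compact (convex_hull_upto n K)"
proof (induction n)
  case (Suc n)
  have "convex_hull_upto (Suc n) K =
      K \<union> {(1 - u) *\<^sub>R a + u *\<^sub>R b | a b u. 0 \<le> u \<and> u \<le> 1 \<and> a \<in> K \<and> b \<in> convex_hull_upto n K}"
    by (rule subset_antisym[OF convex_hull_upto_Suc_subset convex_hull_upto_Suc_supset])
  then show ?case
    using compact_convex_combinations[OF assms Suc.IH] assms by (simp add: compact_Un)
qed (simp add: convex_hull_upto_0)

lemma caratheodory_fd: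
  fixes B K :: "'a::real_vector set"
  assumes "finite B" "span B = UNIV"
  shows "convex hull K = convex_hull_upto (card B + 1) K"
proof (intro subset_antisym subsetI)
  fix x
  assume "x \<in> convex hull K"
  then obtain S u where S: "finite S" "S \<subseteq> K"
    and u: "\<forall>v\<in>S. 0 \<le> u v" "sum u S = 1" "(\<Sum>v\<in>S. u v *\<^sub>R v) = x"
    unfolding convex_hull_explicit by blast
  then have "x \<in> convex hull S"
    unfolding convex_hull_finite[OF S(1)] by blast
  then obtain T where T: "T \<subseteq> S" "\<not> affine_dependent T" "x \<in> convex hull T"
    using convex_hull_affine_independent_subset[OF S(1)] by blast
  moreover have "finite T"
    using S(1) T(1) by (rule finite_subset[rotated])
  ultimately show "x \<in> convex_hull_upto (card B + 1) K"
    unfolding convex_hull_upto_def using S(2) affine_independent_card_le_fd[OF assms T(2)] by blast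
next
  fix x
  assume "x \<in> convex_hull_upto (card B + 1) K"
  then obtain T where "T \<subseteq> K" "x \<in> convex hull T"
    by (auto simp: convex_hull_upto_def)
  then show "x \<in> convex hull K"
    using hull_mono by blast
qed

lemma compact_convex_hull_fd:
  fixes B K :: "'a::real_normed_vector set"
  assumes "finite B" "span B = UNIV" "compact K"
  shows "compact (convex hull K)"
  using compact_convex_hull_upto[OF assms(3)] by (simp add: caratheodory_fd[OF assms(1,2)])

lemma separating_hyperplane_compact_point:
  fixes K :: "'a::real_inner set"
  assumes "convex K" "compact K" "z \<notin> K"
  shows "\<exists>a. \<forall>x\<in>K. inner a x < inner a z"
proof (cases "K = {}")
  case False
  have "continuous_on K (\<lambda>x. dist z x)"
    by (intro continuous_intros)
  then obtain y where "y \<in> K" and y: "\<And>x. x \<in> K \<Longrightarrow> dist z y \<le> dist z x"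
    using continuous_attains_inf[OF assms(2) False] by blast
  show ?thesis
  proof (intro exI ballI)
    fix x
    assume "x \<in> K"
    have False if pos: "0 < inner (z - y) (x - y)"
    proof -
      obtain u where u: "0 < u" "u \<le> 1" and closer: "dist (y + u *\<^sub>R (x - y)) z < dist y z"
        using closer_point_lemma[OF pos] by blast
      have "(1 - u) *\<^sub>R y + u *\<^sub>R x \<in> K"
        using convexD_alt[OF assms(1) \<open>y \<in> K\<close> \<open>x \<in> K\<close>] u by simp
      moreover have "(1 - u) *\<^sub>R y + u *\<^sub>R x = y + u *\<^sub>R (x - y)"
        by (simp add: algebra_simps)
      ultimately show False
        using y[of "y + u *\<^sub>R (x - y)"] closer by (simp add: dist_commute)
    qed
    moreover have "0 < inner (z - y) (z - y)"
      using \<open>y \<in> K\<close> assms(3) by auto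
    ultimately show "inner (z - y) x < inner (z - y) z"
      by (force simp: inner_diff_right inner_diff_left inner_commute)
  qed
qed simp

lemma FTvN_system_norm: "FTvN_system lam \<Longrightarrow> norm (lam x) = norm x"
  by (simp add: FTvN_system_def)

lemma FTvN_system_inner_le: "FTvN_system lam \<Longrightarrow> inner x y \<le> inner (lam x) (lam y)"
  by (simp add: FTvN_system_def)

lemma FTvN_system_attains:
  "FTvN_system lam \<Longrightarrow> \<exists>z. lam z = lam y \<and> inner c z = inner (lam c) (lam y)"
  unfolding FTvN_system_def by (metis rangeI)

lemma FTvN_system_norm_diff_le:
  assumes "FTvN_system lam"
  shows "norm (lam a - lam b) \<le> norm (a - b)"
proof -
  have "(norm (lam a - lam b))\<^sup>2 = (norm (lam a))\<^sup>2 + (norm (lam b))\<^sup>2 - 2 * inner (lam a) (lam b)"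
    by (simp add: power2_norm_eq_inner inner_diff_left inner_diff_right inner_commute)
  also have "\<dots> \<le> (norm a)\<^sup>2 + (norm b)\<^sup>2 - 2 * inner a b"
    using FTvN_system_norm[OF assms] FTvN_system_inner_le[OF assms, of a b] by simp
  also have "\<dots> = (norm (a - b))\<^sup>2"
    by (simp add: power2_norm_eq_inner inner_diff_left inner_diff_right inner_commute)
  finally show ?thesis
    by (rule power2_le_imp_le) simp
qed

lemma compact_orbit_fd:
  fixes lam :: "'v::real_inner \<Rightarrow> 'w::real_inner" and B :: "'v set"
  assumes "FTvN_system lam" "finite B" "span B = UNIV"
  shows "compact (orbit lam y)"
proof (rule bounded_closed_imp_compact_fd[OF assms(2,3)])
  have "norm z = norm y" if "z \<in> orbit lam y" for z
    using that FTvN_system_norm[OF assms(1), of z] FTvN_system_norm[OF assms(1), of y]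
    by (simp add: orbit_def)
  then have "orbit lam y \<subseteq> cball 0 (norm y)"
    by auto
  then show "bounded (orbit lam y)"
    using bounded_cball bounded_subset by blast
  have "continuous_on UNIV lam"
    using FTvN_system_norm_diff_le[OF assms(1)]
    by (intro lipschitz_on_continuous_on[of 1]) (simp add: lipschitz_on_def dist_norm)
  then show "closed (orbit lam y)"
    unfolding orbit_def using continuous_closed_preimage_constant[of UNIV lam] by simp
qed

lemma majorized_imp_inner_le:
  assumes "FTvN_system lam" "majorized lam x y"
  shows "inner c x \<le> inner (lam c) (lam y)"
proof -
  have "inner c z \<le> inner (lam c) (lam y)" if "z \<in> orbit lam y" for z
    using that FTvN_system_inner_le[OF assms(1), of c z] by (simp add: orbit_def)
  then have "orbit lam y \<subseteq> {z. inner c z \<le> inner (lam c) (lam y)}"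
    by blast
  then have "convex hull (orbit lam y) \<subseteq> {z. inner c z \<le> inner (lam c) (lam y)}"
    by (intro hull_minimal convex_halfspace_le)
  then show ?thesis
    using assms(2) by (auto simp: majorized_def)
qed

lemma inner_le_imp_majorized_fd:
  fixes lam :: "'v::real_inner \<Rightarrow> 'w::real_inner" and B :: "'v set"
  assumes "FTvN_system lam" "finite B" "span B = UNIV"
    and le: "\<And>c. inner c x \<le> inner (lam c) (lam y)"
  shows "majorized lam x y"
proof (rule ccontr)
  let ?K = "convex hull (orbit lam y)"
  assume "\<not> majorized lam x y"
  moreover have "compact ?K"
    using compact_convex_hull_fd[OF assms(2,3) compact_orbit_fd[OF assms(1-3)]] .
  ultimately obtain c where c: "\<forall>z\<in>?K. inner c z < inner c x"
    using separating_hyperplane_compact_point[of ?K x] by (auto simp: majorized_def)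
  obtain z where "lam z = lam y" "inner c z = inner (lam c) (lam y)"
    using FTvN_system_attains[OF assms(1)] by blast
  moreover from this(1) have "z \<in> ?K"
    by (simp add: orbit_def hull_inc)
  ultimately show False
    using c le[of c] by fastforce
qed

lemma majorized_imp_inner_lam_le:
  assumes "FTvN_system lam" "majorized lam x y"
  shows "inner (lam c) (lam x) \<le> inner (lam c) (lam y)"
proof -
  obtain c' where "lam c' = lam c" "inner x c' = inner (lam x) (lam c)"
    using FTvN_system_attains[OF assms(1), of c x] by blast
  then show ?thesis
    using majorized_imp_inner_le[OF assms, of c'] by (simp add: inner_commute)
qed

lemma orbit_eq_iff: "orbit lam x = orbit lam y \<longleftrightarrow> lam x = lam y"
  by (auto simp: orbit_def)

lemma majorized_if_lam_eq: "lam x = lam y \<Longrightarrow> majorized lam x y"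
  by (simp add: majorized_def orbit_def hull_inc)

lemma majorized_antisym:
  assumes "FTvN_system lam" "majorized lam x y" "majorized lam y x"
  shows "lam x = lam y"
proof -
  have "inner (lam u) (lam u) = inner u u" for u
    by (simp flip: power2_norm_eq_inner add: FTvN_system_norm[OF assms(1)])
  then have "(norm (lam x - lam y))\<^sup>2 \<le> 0"
    using majorized_imp_inner_le[OF assms(1,2), of x] majorized_imp_inner_le[OF assms(1,3), of y]
    by (simp add: power2_norm_eq_inner inner_diff_left inner_diff_right inner_commute)
  then show ?thesis
    by simp
qed

theorem proposition8p3:
  fixes lam :: "'v::real_inner \<Rightarrow> 'w::real_inner" and x y :: 'v
  assumes "FTvN_system lam"
  shows "((majorized lam x y \<longrightarrow> (\<forall>c. inner c x \<le> inner (lam c) (lam y))) \<and>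
         (fin_dim_space TYPE('v) \<longrightarrow>
            ((\<forall>c. inner c x \<le> inner (lam c) (lam y)) \<longrightarrow> majorized lam x y))) \<and>
         ((majorized lam x y \<longrightarrow> (\<forall>c. inner (lam c) (lam x) \<le> inner (lam c) (lam y))) \<and>
         (fin_dim_space TYPE('v) \<longrightarrow>
            ((\<forall>c. inner (lam c) (lam x) \<le> inner (lam c) (lam y)) \<longrightarrow> majorized lam x y))) \<and>
         ((majorized lam x y \<and> majorized lam y x) \<longleftrightarrow> orbit lam x = orbit lam y)"
proof -
  have converse_a: "majorized lam x y"
    if fd: "fin_dim_space TYPE('v)" and le: "\<And>c. inner c x \<le> inner (lam c) (lam y)"
  proof -
    obtain B :: "'v set" where "finite B" "span B = UNIV"
      using fd by (auto simp: fin_dim_space_def)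
    then show ?thesis
      using inner_le_imp_majorized_fd[OF assms] le by blast
  qed
  have converse_b: "majorized lam x y"
    if fd: "fin_dim_space TYPE('v)" and le: "\<And>c. inner (lam c) (lam x) \<le> inner (lam c) (lam y)"
  proof (rule converse_a[OF fd])
    show "inner c x \<le> inner (lam c) (lam y)" for c
      using FTvN_system_inner_le[OF assms, of c x] le[of c] by linarith
  qed
  have part_c: "majorized lam x y \<and> majorized lam y x \<longleftrightarrow> orbit lam x = orbit lam y"
    using majorized_antisym[OF assms] majorized_if_lam_eq orbit_eq_iff by metis
  show ?thesis
    using majorized_imp_inner_le[OF assms] majorized_imp_inner_lam_le[OF assms]
      converse_a converse_b part_c
    by (intro conjI impI allI) blast+
qed

end
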